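(* Let $\beta:\mathcal{U}^{(1)}\to\mathbb{C}[[X]]$ be a continuous linear map. Then there is a continuous unital algebra homomorphism $\bar\beta:\mathcal{U}\to\mathbb{C}[[X]]$ extending $\beta$.
   Context: Let $S$ be the set of finitely supported sequences $r=(r_1,r_2,\dots)$ of nonnegative integers, $|r|=\sum_i r_i$, $X^r=\prod_iX_i^{r_i}$ in commuting indeterminates. $\mathcal{U}$ is the commutative unital Fréchet algebra of formal power series $f=\sum_{r\in S}\alpha_rX^r$ with $q_m(f)=\sum_r|\alpha_r|m^{|r|}<\infty$ for all $m\in\mathbb{N}$, topologized by the norms $(q_m)$. $\mathcal{U}^{(1)}$ is the closed linear subspace of $\mathcal{U}$ of homogeneous linear series $\sum_{i}\alpha_iX_i$ (with $\sum_i|\alpha_i|<\infty$), with the relative topology. $\mathbb{C}[[X]]$ is the algebra of formal power series in one indeterminate with the Fréchet topology of coordinatewise convergence. *)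

theory Defs
  imports "HOL-Analysis.Analysis" "HOL-Computational_Algebra.Formal_Power_Series"
begin

definition fsupp_seqs :: "(nat \<Rightarrow> nat) set" where
  "fsupp_seqs = {r. finite {i. r i \<noteq> 0}}"

definition msize :: "(nat \<Rightarrow> nat) \<Rightarrow> nat" where
  "msize r = sum r {i. r i \<noteq> 0}"

text \<open>A formal power series in X_1, X_2, ... is represented by its coefficient
  function alpha, with alpha r the coefficient of X^r (zero off fsupp_seqs).\<close>
type_synonym mseries = "(nat \<Rightarrow> nat) \<Rightarrow> complex"

definition qnorm :: "nat \<Rightarrow> mseries \<Rightarrow> real" where
  "qnorm m f = infsum (\<lambda>r. norm (f r) * real m ^ msize r) fsupp_seqs"

definition U_alg :: "mseries set" where
  "U_alg = {f. (\<forall>r. r \<notin> fsupp_seqs \<longrightarrow> f r = 0) \<and>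
               (\<forall>m::nat. (\<lambda>r. norm (f r) * real m ^ msize r) summable_on fsupp_seqs)}"

definition U_lin :: "mseries set" where
  "U_lin = {f \<in> U_alg. \<forall>r. msize r \<noteq> 1 \<longrightarrow> f r = 0}"

definition ms_add :: "mseries \<Rightarrow> mseries \<Rightarrow> mseries" where
  "ms_add f g = (\<lambda>r. f r + g r)"

definition ms_scale :: "complex \<Rightarrow> mseries \<Rightarrow> mseries" where
  "ms_scale c f = (\<lambda>r. c * f r)"

definition ms_mult :: "mseries \<Rightarrow> mseries \<Rightarrow> mseries" where
  "ms_mult f g = (\<lambda>r. \<Sum>s\<in>{s. s \<le> r}. f s * g (r - s))"

definition ms_one :: mseries where
  "ms_one = (\<lambda>r. if r = (\<lambda>_. 0) then 1 else 0)"

definition U_top :: "mseries topology" where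
  "U_top = topology (\<lambda>V. V \<subseteq> U_alg \<and>
     (\<forall>f\<in>V. \<exists>m::nat. \<exists>e>0. {g \<in> U_alg. qnorm m (\<lambda>r. g r - f r) < e} \<subseteq> V))"

definition fps_top :: "complex fps topology" where
  "fps_top = pullback_topology UNIV fps_nth (product_topology (\<lambda>_. euclidean) UNIV)"

end

theory Submission
  imports Defs
begin

text \<open>Put b_i = beta(X_i). Continuity of beta at 0 bounds the n-th coefficient of b_i uniformly
  in i, because q_m(c X_i) = |c| m. The truncated l1-norm a |-> sum_{n<=k} |a_n| on C[[X]] is
  submultiplicative, so the k-th coefficient of the monomial b^r = prod_i b_i^(r_i) is at most
  m^|r| for some m depending only on k. Hence sum_r alpha_r X^r |-> sum_r alpha_r b^r converges
  coefficientwise on U, its k-th coefficient being bounded by q_m; this is the extension. It is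
  multiplicative by the Cauchy product of absolutely summable families, and it agrees with beta
  on U^(1) because both are continuous and linear there and agree on the finite truncations of
  a linear series, which converge to it in U.\<close>

no_notation vec_nth (infixl \<open>$\<close> 90)
notation fps_nth (infixl \<open>$\<close> 75)

section \<open>Multi-indices\<close>

lemma mem_fsupp_seqs: "r \<in> fsupp_seqs \<longleftrightarrow> finite {i. r i \<noteq> 0}"
  by (simp add: fsupp_seqs_def)

lemma fsupp_seqs_add:
  "r \<in> fsupp_seqs \<Longrightarrow> s \<in> fsupp_seqs \<Longrightarrow> (\<lambda>i. r i + s i) \<in> fsupp_seqs"
  unfolding mem_fsupp_seqs by (rule finite_subset[of _ "{i. r i \<noteq> 0} \<union> {i. s i \<noteq> 0}"]) auto

lemma fsupp_seqs_le:
  assumes "r \<in> fsupp_seqs" "s \<le> r"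
  shows "s \<in> fsupp_seqs"
proof -
  have "{i. s i \<noteq> 0} \<subseteq> {i. r i \<noteq> 0}"
    using assms(2) unfolding le_fun_def by (metis (mono_tags) Collect_mono le_zero_eq)
  then show ?thesis using assms(1) finite_subset by (auto simp: mem_fsupp_seqs)
qed

lemma fsupp_seqs_diff: "r \<in> fsupp_seqs \<Longrightarrow> r - s \<in> fsupp_seqs"
  unfolding mem_fsupp_seqs by (rule finite_subset[of _ "{i. r i \<noteq> 0}"]) auto

definition unit_index :: "nat \<Rightarrow> nat \<Rightarrow> nat" where
  "unit_index i = (\<lambda>j. if j = i then 1 else 0)"

lemma unit_index_in_fsupp_seqs: "unit_index i \<in> fsupp_seqs"
  unfolding mem_fsupp_seqs unit_index_def by (rule finite_subset[of _ "{i}"]) auto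

lemma msize_unit_index: "msize (unit_index i) = 1"
proof -
  have "{j. unit_index i j \<noteq> 0} = {i}" by (auto simp: unit_index_def)
  then show ?thesis by (simp add: msize_def unit_index_def)
qed

lemma msize_eq_1_imp_unit_index:
  assumes "r \<in> fsupp_seqs" "msize r = 1"
  obtains i where "r = unit_index i"
proof -
  let ?S = "{i. r i \<noteq> 0}"
  have S: "finite ?S" using assms(1) by (simp add: mem_fsupp_seqs)
  have sum: "sum r ?S = 1" using assms(2) by (simp add: msize_def)
  have "?S \<noteq> {}"
  proof
    assume "?S = {}"
    then have "sum r ?S = 0" by (simp only: sum.empty)
    with sum show False by simp
  qed
  then obtain i where i: "r i \<noteq> 0" by blast
  have "r i + sum r (?S - {i}) = 1" using sum.remove[OF S, of i r] i sum by simp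
  then have ri: "r i = 1" and rest: "sum r (?S - {i}) = 0" using i by auto
  have "r j = 0" if "j \<noteq> i" for j
  proof (rule ccontr)
    assume "r j \<noteq> 0"
    then have "r j \<le> sum r (?S - {i})" using S that by (intro member_le_sum) auto
    then show False using rest \<open>r j \<noteq> 0\<close> by simp
  qed
  then have "r = unit_index i" using ri by (auto simp: unit_index_def)
  then show ?thesis by (rule that)
qed

lemma finite_lower_indices:
  assumes "r \<in> fsupp_seqs"
  shows "finite {s. s \<le> r}"
proof -
  let ?S = "{i. r i \<noteq> 0}"
  have "{s. s \<le> r} \<subseteq> (\<lambda>g i. if i \<in> ?S then g i else 0) ` PiE ?S (\<lambda>i. {..r i})"
  proof
    fix s assume "s \<in> {s. s \<le> r}"
    then have le: "s i \<le> r i" for i by (simp add: le_fun_def)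
    have "s = (\<lambda>i. if i \<in> ?S then restrict s ?S i else 0)"
    proof
      fix i show "s i = (if i \<in> ?S then restrict s ?S i else 0)" using le[of i] by auto
    qed
    moreover have "restrict s ?S \<in> PiE ?S (\<lambda>i. {..r i})" using le by auto
    ultimately show "s \<in> (\<lambda>g i. if i \<in> ?S then g i else 0) ` PiE ?S (\<lambda>i. {..r i})"
      by (rule image_eqI)
  qed
  moreover have "finite (PiE ?S (\<lambda>i. {..r i}))"
    using assms by (intro finite_PiE) (simp_all add: mem_fsupp_seqs)
  ultimately show ?thesis by (meson finite_imageI finite_subset)
qed

section \<open>The algebra U\<close>

lemma U_alg_summable: "f \<in> U_alg \<Longrightarrow> (\<lambda>r. norm (f r) * real m ^ msize r) summable_on fsupp_seqs"
  by (simp add: U_alg_def)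

lemma ms_add_in_U_alg:
  assumes "f \<in> U_alg" "g \<in> U_alg"
  shows "ms_add f g \<in> U_alg"
proof -
  have "(\<lambda>r. norm (f r + g r) * real m ^ msize r) summable_on fsupp_seqs" for m
  proof (rule summable_on_comparison_test)
    show "(\<lambda>r. norm (f r) * real m ^ msize r + norm (g r) * real m ^ msize r) summable_on fsupp_seqs"
      using assms by (intro summable_on_add U_alg_summable)
    show "norm (f r + g r) * real m ^ msize r
            \<le> norm (f r) * real m ^ msize r + norm (g r) * real m ^ msize r" for r
      using mult_right_mono[OF norm_triangle_ineq[of "f r" "g r"], of "real m ^ msize r"]
      by (simp add: distrib_right)
  qed auto
  then show ?thesis using assms by (auto simp: U_alg_def ms_add_def)
qed

lemma ms_scale_in_U_alg:
  assumes "f \<in> U_alg"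
  shows "ms_scale c f \<in> U_alg"
proof -
  have "(\<lambda>r. norm c * (norm (f r) * real m ^ msize r)) summable_on fsupp_seqs" for m
    using assms by (intro summable_on_cmult_right U_alg_summable)
  then show ?thesis using assms by (auto simp: U_alg_def ms_scale_def norm_mult mult.assoc)
qed

lemma ms_add_scale_minus_one: "ms_add g (ms_scale (-1) f) = (\<lambda>r. g r - f r)"
  by (auto simp: ms_add_def ms_scale_def)

lemma diff_in_U_alg: "f \<in> U_alg \<Longrightarrow> g \<in> U_alg \<Longrightarrow> (\<lambda>r. g r - f r) \<in> U_alg"
  unfolding ms_add_scale_minus_one[symmetric] by (intro ms_add_in_U_alg ms_scale_in_U_alg)

lemma U_lin_subset_U_alg: "U_lin \<subseteq> U_alg"
  by (auto simp: U_lin_def)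

lemma ms_scale_in_U_lin: "f \<in> U_lin \<Longrightarrow> ms_scale c f \<in> U_lin"
  by (auto simp: U_lin_def ms_scale_in_U_alg) (auto simp: ms_scale_def)

lemma zero_in_U_lin: "(\<lambda>_. 0) \<in> U_lin"
  by (auto simp: U_lin_def U_alg_def)

definition ms_var :: "nat \<Rightarrow> mseries" where
  "ms_var i = (\<lambda>r. if r = unit_index i then 1 else 0)"

lemma ms_var_in_U_lin: "ms_var i \<in> U_lin"
proof -
  have "(\<lambda>r. norm (ms_var i r) * real m ^ msize r) summable_on fsupp_seqs" for m
    by (rule finite_nonzero_values_imp_summable_on, rule finite_subset[of _ "{unit_index i}"])
       (auto simp: ms_var_def)
  then show ?thesis
    using unit_index_in_fsupp_seqs msize_unit_index by (auto simp: U_lin_def U_alg_def ms_var_def)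
qed

lemma qnorm_scale_ms_var: "qnorm m (ms_scale c (ms_var i)) = norm c * real m"
proof -
  have "qnorm m (ms_scale c (ms_var i))
          = (\<Sum>\<^sub>\<infinity>r\<in>{unit_index i}. norm (ms_scale c (ms_var i) r) * real m ^ msize r)"
    unfolding qnorm_def
    by (rule infsum_cong_neutral) (auto simp: ms_scale_def ms_var_def unit_index_in_fsupp_seqs)
  then show ?thesis by (simp add: ms_scale_def ms_var_def msize_unit_index)
qed

definition ms_restrict :: "(nat \<Rightarrow> nat) set \<Rightarrow> mseries \<Rightarrow> mseries" where
  "ms_restrict F f = (\<lambda>r. if r \<in> F then f r else 0)"

lemma ms_restrict_in_U_lin:
  assumes "f \<in> U_lin"
  shows "ms_restrict F f \<in> U_lin"
proof -
  have "(\<lambda>r. norm (ms_restrict F f r) * real m ^ msize r) summable_on fsupp_seqs" for m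
    by (rule summable_on_comparison_test[OF U_alg_summable[of f m]])
       (use assms U_lin_subset_U_alg in \<open>auto simp: ms_restrict_def\<close>)
  then show ?thesis using assms by (auto simp: U_lin_def U_alg_def ms_restrict_def)
qed

lemma qnorm_mono: "d \<in> U_alg \<Longrightarrow> m \<le> m' \<Longrightarrow> qnorm m d \<le> qnorm m' d"
  unfolding qnorm_def
  by (rule infsum_mono) (auto intro!: U_alg_summable mult_left_mono power_mono)

lemma qnorm_restrict_diff:
  assumes "f \<in> U_alg" "finite F" "F \<subseteq> fsupp_seqs"
  shows "qnorm m (\<lambda>r. ms_restrict F f r - f r)
           = qnorm m f - (\<Sum>r\<in>F. norm (f r) * real m ^ msize r)"
proof -
  define a where "a = (\<lambda>r. norm (f r) * real m ^ msize r)"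
  have "a summable_on (fsupp_seqs - F)"
    unfolding a_def by (rule summable_on_subset_banach[OF U_alg_summable[OF assms(1)]]) auto
  have "qnorm m f = infsum a (F \<union> (fsupp_seqs - F))"
    unfolding qnorm_def a_def by (metis Un_Diff_cancel Un_absorb1 assms(3))
  also have "\<dots> = sum a F + infsum a (fsupp_seqs - F)"
    using \<open>a summable_on (fsupp_seqs - F)\<close> assms(2) by (subst infsum_Un_disjoint) auto
  also have "infsum a (fsupp_seqs - F) = qnorm m (\<lambda>r. ms_restrict F f r - f r)"
    unfolding qnorm_def a_def ms_restrict_def by (rule infsum_cong_neutral) auto
  finally show ?thesis unfolding a_def by simp
qed

lemma eventually_qnorm_restrict_diff_less:
  assumes "f \<in> U_alg" "e > 0"
  shows "\<forall>\<^sub>F F in finite_subsets_at_top fsupp_seqs. qnorm m (\<lambda>r. ms_restrict F f r - f r) < e"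
proof -
  define a where "a = (\<lambda>r. norm (f r) * real m ^ msize r)"
  have "(sum a \<longlongrightarrow> qnorm m f) (finite_subsets_at_top fsupp_seqs)"
    using has_sum_infsum[OF U_alg_summable[OF assms(1)]] unfolding has_sum_def qnorm_def a_def .
  then have "\<forall>\<^sub>F F in finite_subsets_at_top fsupp_seqs. dist (sum a F) (qnorm m f) < e"
    using assms(2) by (rule tendstoD)
  moreover have "\<forall>\<^sub>F F in finite_subsets_at_top fsupp_seqs. finite F \<and> F \<subseteq> fsupp_seqs"
    by (rule eventually_finite_subsets_at_top_weakI) simp
  ultimately show ?thesis
    by eventually_elim (auto simp: qnorm_restrict_diff[OF assms(1)] a_def dist_real_def)
qed

section \<open>The topology of U\<close>

lemma qnorm_ball_subset:
  assumes "f \<in> U_alg" "m \<le> m'" "e' \<le> e"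
  shows "{g \<in> U_alg. qnorm m' (\<lambda>r. g r - f r) < e'} \<subseteq> {g \<in> U_alg. qnorm m (\<lambda>r. g r - f r) < e}"
  using qnorm_mono[OF diff_in_U_alg[OF assms(1)] assms(2)] assms(3) by fastforce

lemma openin_U_top:
  "openin U_top V \<longleftrightarrow>
     V \<subseteq> U_alg \<and> (\<forall>f\<in>V. \<exists>m::nat. \<exists>e>0. {g \<in> U_alg. qnorm m (\<lambda>r. g r - f r) < e} \<subseteq> V)"
proof -
  define P where "P V \<longleftrightarrow>
     V \<subseteq> U_alg \<and> (\<forall>f\<in>V. \<exists>m::nat. \<exists>e>0. {g \<in> U_alg. qnorm m (\<lambda>r. g r - f r) < e} \<subseteq> V)"
    for V
  have "P (S \<inter> T)" if S: "P S" and T: "P T" for S T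
    unfolding P_def
  proof (intro conjI ballI)
    show "S \<inter> T \<subseteq> U_alg" using S by (auto simp: P_def)
    fix f assume f: "f \<in> S \<inter> T"
    then have "f \<in> U_alg" using S by (auto simp: P_def)
    obtain m1 e1 where "e1 > 0" "{g \<in> U_alg. qnorm m1 (\<lambda>r. g r - f r) < e1} \<subseteq> S"
      using S f unfolding P_def by blast
    moreover obtain m2 e2 where "e2 > 0" "{g \<in> U_alg. qnorm m2 (\<lambda>r. g r - f r) < e2} \<subseteq> T"
      using T f unfolding P_def by blast
    moreover note qnorm_ball_subset[OF \<open>f \<in> U_alg\<close>, of m1 "max m1 m2" "min e1 e2" e1]
      qnorm_ball_subset[OF \<open>f \<in> U_alg\<close>, of m2 "max m1 m2" "min e1 e2" e2]
    ultimately show "\<exists>m. \<exists>e>0. {g \<in> U_alg. qnorm m (\<lambda>r. g r - f r) < e} \<subseteq> S \<inter> T"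
      by (intro exI[of _ "max m1 m2"] exI[of _ "min e1 e2"]) auto
  qed
  moreover have "P (\<Union>K)" if K: "\<forall>V\<in>K. P V" for K
    unfolding P_def
  proof (intro conjI ballI)
    show "\<Union>K \<subseteq> U_alg" using K by (auto simp: P_def)
    fix f assume "f \<in> \<Union>K"
    then obtain V where "V \<in> K" "f \<in> V" by blast
    then obtain m e where "e > 0" "{g \<in> U_alg. qnorm m (\<lambda>r. g r - f r) < e} \<subseteq> V"
      using K unfolding P_def by blast
    then show "\<exists>m. \<exists>e>0. {g \<in> U_alg. qnorm m (\<lambda>r. g r - f r) < e} \<subseteq> \<Union>K"
      using \<open>V \<in> K\<close> by blast
  qed
  ultimately have "istopology P" unfolding istopology_def by blast
  then show ?thesis unfolding U_top_def P_def[abs_def] by simp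
qed

lemma topspace_U_top: "topspace U_top = U_alg"
proof
  show "topspace U_top \<subseteq> U_alg" using openin_topspace[of U_top] unfolding openin_U_top by blast
  have "openin U_top U_alg" unfolding openin_U_top by (auto intro: exI[of _ "1::real"])
  then show "U_alg \<subseteq> topspace U_top" by (rule openin_subset)
qed

lemma continuous_map_U_top_if_qnorm_bounded:
  fixes h :: "mseries \<Rightarrow> 'a::real_normed_vector"
  assumes diff: "\<And>f g. f \<in> U_alg \<Longrightarrow> g \<in> U_alg \<Longrightarrow> h (\<lambda>r. g r - f r) = h g - h f"
    and bound: "\<And>f. f \<in> U_alg \<Longrightarrow> norm (h f) \<le> qnorm m f"
  shows "continuous_map U_top euclidean h"
  unfolding continuous_map_def topspace_U_top
proof (intro conjI allI impI)
  fix U :: "'a set" assume "openin euclidean U"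
  show "openin U_top {f \<in> U_alg. h f \<in> U}"
    unfolding openin_U_top
  proof (intro conjI ballI)
    fix f assume f: "f \<in> {f \<in> U_alg. h f \<in> U}"
    then obtain e where e: "e > 0" "ball (h f) e \<subseteq> U"
      using \<open>openin euclidean U\<close> open_contains_ball by force
    have "h g \<in> U" if "g \<in> U_alg" "qnorm m (\<lambda>r. g r - f r) < e" for g
    proof -
      have "dist (h f) (h g) \<le> qnorm m (\<lambda>r. g r - f r)"
        using f that bound[OF diff_in_U_alg] by (simp add: dist_norm norm_minus_commute diff)
      then show ?thesis using e that by auto
    qed
    then show "\<exists>m. \<exists>e>0. {g \<in> U_alg. qnorm m (\<lambda>r. g r - f r) < e} \<subseteq> {f \<in> U_alg. h f \<in> U}"
      using e by blast
  qed auto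
qed auto

lemma continuous_map_U_top_qnormE:
  fixes h :: "mseries \<Rightarrow> 'a::metric_space"
  assumes cont: "continuous_map (subtopology U_top S) euclidean h"
    and "S \<subseteq> U_alg" "f \<in> S" "\<epsilon> > 0"
  obtains m e where "e > 0"
    "\<And>g. g \<in> S \<Longrightarrow> qnorm m (\<lambda>r. g r - f r) < e \<Longrightarrow> dist (h g) (h f) < \<epsilon>"
proof -
  have top: "topspace (subtopology U_top S) = S"
    using \<open>S \<subseteq> U_alg\<close> by (auto simp: topspace_U_top)
  have "openin (subtopology U_top S) {g \<in> topspace (subtopology U_top S). h g \<in> ball (h f) \<epsilon>}"
    by (rule openin_continuous_map_preimage[OF cont]) simp
  then have "openin (subtopology U_top S) {g \<in> S. h g \<in> ball (h f) \<epsilon>}"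
    by (simp only: top)
  then obtain T where T: "openin U_top T" "{g \<in> S. h g \<in> ball (h f) \<epsilon>} = T \<inter> S"
    unfolding openin_subtopology by blast
  have "f \<in> {g \<in> S. h g \<in> ball (h f) \<epsilon>}" using \<open>f \<in> S\<close> \<open>\<epsilon> > 0\<close> by simp
  then have "f \<in> T" unfolding T(2) by blast
  then obtain m e where me: "e > 0" "{g \<in> U_alg. qnorm m (\<lambda>r. g r - f r) < e} \<subseteq> T"
    using T(1) unfolding openin_U_top by blast
  show ?thesis
  proof (rule that[OF me(1)])
    fix g assume "g \<in> S" "qnorm m (\<lambda>r. g r - f r) < e"
    then have "g \<in> T \<inter> S" using me(2) \<open>S \<subseteq> U_alg\<close> by blast
    then have "h g \<in> ball (h f) \<epsilon>" unfolding T(2)[symmetric] by blast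
    then show "dist (h g) (h f) < \<epsilon>" by (simp add: dist_commute)
  qed
qed

lemma continuous_map_fps_top_iff:
  "continuous_map X fps_top h \<longleftrightarrow> (\<forall>k. continuous_map X euclidean (\<lambda>x. h x $ k))"
proof
  assume "continuous_map X fps_top h"
  moreover have "continuous_map fps_top euclidean (\<lambda>a. a $ k)" for k
    using continuous_map_pullback[OF continuous_map_product_projection[of k UNIV "\<lambda>_. euclidean"]]
    by (simp add: fps_top_def o_def)
  ultimately show "\<forall>k. continuous_map X euclidean (\<lambda>x. h x $ k)"
    using continuous_map_compose by (fastforce simp: o_def)
next
  assume "\<forall>k. continuous_map X euclidean (\<lambda>x. h x $ k)"
  then show "continuous_map X fps_top h"
    unfolding fps_top_def
    by (intro continuous_map_pullback') (auto simp: continuous_map_componentwise_UNIV o_def)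
qed

section \<open>Coefficient bounds for monomials in power series\<close>

definition fps_seminorm :: "nat \<Rightarrow> 'a::real_normed_vector fps \<Rightarrow> real" where
  "fps_seminorm k a = (\<Sum>n\<le>k. norm (a $ n))"

lemma fps_seminorm_nonneg: "0 \<le> fps_seminorm k a"
  unfolding fps_seminorm_def by (simp add: sum_nonneg)

lemma norm_fps_nth_le_seminorm: "n \<le> k \<Longrightarrow> norm (a $ n) \<le> fps_seminorm k a"
  unfolding fps_seminorm_def by (rule member_le_sum) auto

lemma fps_seminorm_one: "fps_seminorm k (1 :: 'a::real_normed_algebra_1 fps) = 1"
proof -
  have "fps_seminorm k (1 :: 'a fps) = (\<Sum>n\<le>k. if n = 0 then 1 else 0)"
    unfolding fps_seminorm_def by (rule sum.cong) (auto simp: fps_one_nth)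
  then show ?thesis by simp
qed

lemma fps_seminorm_mult:
  fixes a b :: "'a::real_normed_div_algebra fps"
  shows "fps_seminorm k (a * b) \<le> fps_seminorm k a * fps_seminorm k b"
proof -
  have "fps_seminorm k (a * b) \<le> (\<Sum>n\<le>k. \<Sum>i\<le>n. norm (a $ i) * norm (b $ (n - i)))"
    unfolding fps_seminorm_def fps_mult_nth
    by (intro sum_mono order_trans[OF norm_sum]) (simp add: norm_mult atLeast0AtMost)
  also have "\<dots> = (\<Sum>(i, j) \<in> {(i, j). i + j \<le> k}. norm (a $ i) * norm (b $ j))"
    by (rule sum.triangle_reindex_eq[symmetric])
  also have "\<dots> \<le> (\<Sum>(i, j) \<in> {..k} \<times> {..k}. norm (a $ i) * norm (b $ j))"
    by (rule sum_mono2) auto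
  also have "\<dots> = fps_seminorm k a * fps_seminorm k b"
    unfolding fps_seminorm_def sum_product sum.cartesian_product ..
  finally show ?thesis .
qed

lemma fps_seminorm_power_le:
  fixes a :: "'a::real_normed_div_algebra fps"
  assumes "fps_seminorm k a \<le> K"
  shows "fps_seminorm k (a ^ n) \<le> K ^ n"
proof (induction n)
  case 0
  show ?case by (simp add: fps_seminorm_one)
next
  case (Suc n)
  have "fps_seminorm k (a * a ^ n) \<le> fps_seminorm k a * fps_seminorm k (a ^ n)"
    by (rule fps_seminorm_mult)
  also have "\<dots> \<le> K * K ^ n"
    using assms Suc.IH order_trans[OF fps_seminorm_nonneg assms]
    by (intro mult_mono) (simp_all add: fps_seminorm_nonneg)
  finally show ?case by simp
qed

lemma fps_seminorm_prod_power_le: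
  fixes b :: "nat \<Rightarrow> 'a::real_normed_field fps"
  assumes "finite S" and "\<And>i. i \<in> S \<Longrightarrow> fps_seminorm k (b i) \<le> K"
  shows "fps_seminorm k (\<Prod>i\<in>S. b i ^ r i) \<le> K ^ sum r S"
  using assms
proof (induction S rule: finite_induct)
  case empty
  show ?case by (simp add: fps_seminorm_one)
next
  case (insert x S)
  have "0 \<le> K" using insert.prems[of x] fps_seminorm_nonneg[of k "b x"] by simp
  have "fps_seminorm k (b x ^ r x * (\<Prod>i\<in>S. b i ^ r i))
          \<le> fps_seminorm k (b x ^ r x) * fps_seminorm k (\<Prod>i\<in>S. b i ^ r i)"
    by (rule fps_seminorm_mult)
  also have "\<dots> \<le> K ^ r x * K ^ sum r S"
    using insert \<open>0 \<le> K\<close> by (intro mult_mono fps_seminorm_power_le) (simp_all add: fps_seminorm_nonneg)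
  finally show ?case using insert.hyps by (simp add: power_add)
qed

definition fps_monomial :: "(nat \<Rightarrow> 'a::comm_semiring_1 fps) \<Rightarrow> (nat \<Rightarrow> nat) \<Rightarrow> 'a fps" where
  "fps_monomial b r = (\<Prod>i\<in>{i. r i \<noteq> 0}. b i ^ r i)"

lemma fps_monomial_eq_prod:
  assumes "finite S" "{i. r i \<noteq> 0} \<subseteq> S"
  shows "fps_monomial b r = (\<Prod>i\<in>S. b i ^ r i)"
  unfolding fps_monomial_def by (rule prod.mono_neutral_left) (use assms in auto)

lemma fps_monomial_zero: "fps_monomial b (\<lambda>_. 0) = 1"
  by (simp add: fps_monomial_def)

lemma fps_monomial_unit_index: "fps_monomial b (unit_index i) = b i"
  by (subst fps_monomial_eq_prod[of "{i}"]) (auto simp: unit_index_def)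

lemma fps_monomial_add:
  assumes "r \<in> fsupp_seqs" "s \<in> fsupp_seqs"
  shows "fps_monomial b (\<lambda>i. r i + s i) = fps_monomial b r * fps_monomial b s"
proof -
  let ?S = "{i. r i \<noteq> 0} \<union> {i. s i \<noteq> 0}"
  have S: "finite ?S" using assms by (simp add: mem_fsupp_seqs)
  have "fps_monomial b (\<lambda>i. r i + s i) = (\<Prod>i\<in>?S. b i ^ (r i + s i))"
    by (rule fps_monomial_eq_prod[OF S]) auto
  also have "\<dots> = fps_monomial b r * fps_monomial b s"
    using fps_monomial_eq_prod[OF S, of r b] fps_monomial_eq_prod[OF S, of s b]
    by (simp add: power_add prod.distrib)
  finally show ?thesis .
qed

lemma fps_monomial_coeff_bound:
  fixes b :: "nat \<Rightarrow> 'a::real_normed_field fps"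
  assumes bounded: "\<And>i n. norm (b i $ n) \<le> M n"
  obtains m :: nat where "\<And>r. r \<in> fsupp_seqs \<Longrightarrow> norm (fps_monomial b r $ k) \<le> real m ^ msize r"
proof
  define K where "K = (\<Sum>n\<le>k. M n)"
  have bK: "fps_seminorm k (b i) \<le> K" for i
    unfolding fps_seminorm_def K_def by (rule sum_mono) (rule bounded)
  fix r assume "r \<in> fsupp_seqs"
  then have "fps_seminorm k (fps_monomial b r) \<le> K ^ msize r"
    unfolding fps_monomial_def msize_def
    by (intro fps_seminorm_prod_power_le bK) (simp add: mem_fsupp_seqs)
  then have "norm (fps_monomial b r $ k) \<le> K ^ msize r"
    using norm_fps_nth_le_seminorm[of k k "fps_monomial b r"] by simp
  \<comment> \<open>the seminorms q_m are indexed by natural numbers only, hence the rounding\<close>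
  also have "\<dots> \<le> real (nat \<lceil>K\<rceil>) ^ msize r"
    using order_trans[OF fps_seminorm_nonneg bK]
    by (intro power_mono) linarith+
  finally show "norm (fps_monomial b r $ k) \<le> real (nat \<lceil>K\<rceil>) ^ msize r" .
qed

section \<open>Substituting a bounded family of power series\<close>

definition ms_eval :: "(nat \<Rightarrow> complex fps) \<Rightarrow> mseries \<Rightarrow> complex fps" where
  "ms_eval b f = Abs_fps (\<lambda>k. \<Sum>\<^sub>\<infinity>r\<in>fsupp_seqs. f r * fps_monomial b r $ k)"

lemma ms_eval_nth [simp]: "ms_eval b f $ k = (\<Sum>\<^sub>\<infinity>r\<in>fsupp_seqs. f r * fps_monomial b r $ k)"
  by (simp add: ms_eval_def)

lemma norm_ms_eval_term_le:
  fixes b :: "nat \<Rightarrow> 'a::real_normed_field fps"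
  assumes "norm (fps_monomial b r $ k) \<le> real m ^ msize r"
  shows "norm (f r * fps_monomial b r $ k) \<le> norm (f r) * real m ^ msize r"
  unfolding norm_mult using assms by (rule mult_left_mono) simp

lemma abs_summable_ms_eval_nth':
  assumes "\<And>r. r \<in> fsupp_seqs \<Longrightarrow> norm (fps_monomial b r $ k) \<le> real m ^ msize r" "f \<in> U_alg"
  shows "(\<lambda>r. norm (f r * fps_monomial b r $ k)) summable_on fsupp_seqs"
  by (rule summable_on_comparison_test[OF U_alg_summable[OF assms(2)]])
     (auto intro: norm_ms_eval_term_le assms(1))

lemma abs_summable_ms_eval_nth:
  assumes "\<And>i n. norm (b i $ n) \<le> M n" "f \<in> U_alg"
  shows "(\<lambda>r. norm (f r * fps_monomial b r $ k)) summable_on fsupp_seqs"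
proof -
  obtain m where "\<And>r. r \<in> fsupp_seqs \<Longrightarrow> norm (fps_monomial b r $ k) \<le> real m ^ msize r"
    using fps_monomial_coeff_bound[where b = b and M = M and k = k, OF assms(1)] by blast
  then show ?thesis by (rule abs_summable_ms_eval_nth'[OF _ assms(2)])
qed

lemma norm_ms_eval_nth_le:
  assumes "\<And>r. r \<in> fsupp_seqs \<Longrightarrow> norm (fps_monomial b r $ k) \<le> real m ^ msize r" "f \<in> U_alg"
  shows "norm (ms_eval b f $ k) \<le> qnorm m f"
proof -
  have "norm (ms_eval b f $ k) \<le> (\<Sum>\<^sub>\<infinity>r\<in>fsupp_seqs. norm (f r * fps_monomial b r $ k))"
    unfolding ms_eval_nth by (rule norm_infsum_bound) (rule abs_summable_ms_eval_nth'[OF assms])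
  also have "\<dots> \<le> qnorm m f"
    unfolding qnorm_def
    by (rule infsum_mono[OF abs_summable_ms_eval_nth'[OF assms] U_alg_summable[OF assms(2)]])
       (auto intro: norm_ms_eval_term_le assms(1))
  finally show ?thesis .
qed

lemma ms_eval_add:
  assumes "\<And>i n. norm (b i $ n) \<le> M n" "f \<in> U_alg" "g \<in> U_alg"
  shows "ms_eval b (ms_add f g) = ms_eval b f + ms_eval b g"
proof (rule fps_ext)
  fix k
  have summable: "(\<lambda>r. h r * fps_monomial b r $ k) summable_on fsupp_seqs" if "h \<in> U_alg" for h
    by (rule abs_summable_summable[OF abs_summable_ms_eval_nth[OF assms(1) that]])
  have "ms_eval b (ms_add f g) $ k
          = (\<Sum>\<^sub>\<infinity>r\<in>fsupp_seqs. f r * fps_monomial b r $ k + g r * fps_monomial b r $ k)"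
    by (simp add: ms_add_def distrib_right)
  also have "\<dots> = ms_eval b f $ k + ms_eval b g $ k"
    unfolding ms_eval_nth by (intro infsum_add summable assms(2,3))
  finally show "ms_eval b (ms_add f g) $ k = (ms_eval b f + ms_eval b g) $ k" by simp
qed

lemma ms_eval_scale: "ms_eval b (ms_scale c f) = fps_const c * ms_eval b f"
  by (rule fps_ext) (simp add: ms_scale_def mult.assoc infsum_cmult_right')

lemma ms_eval_diff:
  assumes "\<And>i n. norm (b i $ n) \<le> M n" "f \<in> U_alg" "g \<in> U_alg"
  shows "ms_eval b (\<lambda>r. g r - f r) = ms_eval b g - ms_eval b f"
  using ms_eval_add[where b = b, OF assms(1,3) ms_scale_in_U_alg[OF assms(2), of "-1"]]
  by (simp add: ms_add_scale_minus_one ms_eval_scale fps_const_neg[symmetric] del: fps_const_neg)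

lemma ms_eval_one: "ms_eval b ms_one = 1"
proof (rule fps_ext)
  fix k
  have "ms_eval b ms_one $ k = (\<Sum>\<^sub>\<infinity>r\<in>{\<lambda>_. 0}. ms_one r * fps_monomial b r $ k)"
    unfolding ms_eval_nth
    by (rule infsum_cong_neutral) (auto simp: ms_one_def mem_fsupp_seqs)
  then show "ms_eval b ms_one $ k = 1 $ k" by (simp add: ms_one_def fps_monomial_zero)
qed

lemma continuous_map_ms_eval:
  assumes "\<And>i n. norm (b i $ n) \<le> M n"
  shows "continuous_map U_top fps_top (ms_eval b)"
  unfolding continuous_map_fps_top_iff
proof
  fix k
  obtain m where m: "\<And>r. r \<in> fsupp_seqs \<Longrightarrow> norm (fps_monomial b r $ k) \<le> real m ^ msize r"
    using fps_monomial_coeff_bound[where b = b and M = M and k = k, OF assms] by blast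
  show "continuous_map U_top euclidean (\<lambda>f. ms_eval b f $ k)"
  proof (rule continuous_map_U_top_if_qnorm_bounded)
    show "ms_eval b (\<lambda>r. g r - f r) $ k = ms_eval b g $ k - ms_eval b f $ k"
      if "f \<in> U_alg" "g \<in> U_alg" for f g
      by (simp only: ms_eval_diff[where b = b, OF assms that] fps_sub_nth)
    show "norm (ms_eval b f $ k) \<le> qnorm m f" if "f \<in> U_alg" for f
      by (rule norm_ms_eval_nth_le[OF m that])
  qed
qed

lemma has_sum_product:
  fixes F G :: "_ \<Rightarrow> 'a::{real_normed_field, banach, second_countable_topology}"
  assumes "(\<lambda>x. norm (F x)) summable_on A" "(\<lambda>y. norm (G y)) summable_on B"
  shows "((\<lambda>(x, y). F x * G y) has_sum (infsum F A * infsum G B)) (A \<times> B)"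
proof -
  have "(\<lambda>z. norm ((\<lambda>(x, y). F x * G y) z)) summable_on A \<times> B"
  proof (rule Infinite_Sum.abs_summable_on_Sigma_iff
      [where f = "\<lambda>(x, y). F x * G y" and B = "\<lambda>_. B", THEN iffD2], intro conjI ballI)
    show "(\<lambda>y. norm ((\<lambda>(x, y). F x * G y) (x, y))) summable_on B" for x
      using summable_on_cmult_right[OF assms(2), of "norm (F x)"] by (simp add: norm_mult)
    have "(\<Sum>\<^sub>\<infinity>y\<in>B. norm ((\<lambda>(x, y). F x * G y) (x, y)))
            = norm (F x) * (\<Sum>\<^sub>\<infinity>y\<in>B. norm (G y))" for x
      by (simp add: norm_mult infsum_cmult_right')
    moreover have "0 \<le> (\<Sum>\<^sub>\<infinity>y\<in>B. norm (G y))" by (rule infsum_nonneg) simp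
    ultimately show "(\<lambda>x. norm (\<Sum>\<^sub>\<infinity>y\<in>B. norm ((\<lambda>(x, y). F x * G y) (x, y)))) summable_on A"
      using summable_on_cmult_left[OF assms(1)] by (simp add: abs_mult)
  qed
  then have summable: "(\<lambda>(x, y). F x * G y) summable_on A \<times> B"
    by (rule abs_summable_summable)
  have "infsum (\<lambda>(x, y). F x * G y) (A \<times> B) = (\<Sum>\<^sub>\<infinity>x\<in>A. \<Sum>\<^sub>\<infinity>y\<in>B. F x * G y)"
    using infsum_Sigma_banach[OF summable] by simp
  also have "\<dots> = infsum F A * infsum G B"
    by (simp add: infsum_cmult_right' infsum_cmult_left')
  finally show ?thesis using has_sum_infsum[OF summable] by simp
qed

lemma has_sum_sum:
  fixes H :: "'j \<Rightarrow> 'a \<Rightarrow> 'b::{topological_comm_monoid_add}"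
  assumes "finite J" "\<And>j. j \<in> J \<Longrightarrow> (H j has_sum S j) A"
  shows "((\<lambda>x. \<Sum>j\<in>J. H j x) has_sum (\<Sum>j\<in>J. S j)) A"
  using assms by (induction J rule: finite_induct) (auto intro: has_sum_add)

lemma has_sum_reindex_convolution:
  "(h has_sum S) (fsupp_seqs \<times> fsupp_seqs)
     \<longleftrightarrow> ((\<lambda>(r, s). h (s, r - s)) has_sum S) (SIGMA r:fsupp_seqs. {s. s \<le> r})"
proof (rule sym, rule has_sum_reindex_bij_witness[where j = "\<lambda>(r, s). (s, r - s)"
      and i = "\<lambda>(s, t). ((\<lambda>i. s i + t i), s)"])
  fix a assume "a \<in> (SIGMA r:fsupp_seqs. {s. s \<le> r})"
  then obtain r s where a: "a = (r, s)" "r \<in> fsupp_seqs" "s \<le> r" by auto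
  then have "(\<lambda>i. s i + (r - s) i) = r" by (auto simp: le_fun_def fun_eq_iff)
  then show "(\<lambda>(s, t). ((\<lambda>i. s i + t i), s)) ((\<lambda>(r, s). (s, r - s)) a) = a" using a by simp
  show "(\<lambda>(r, s). (s, r - s)) a \<in> fsupp_seqs \<times> fsupp_seqs"
    using a fsupp_seqs_le fsupp_seqs_diff by auto
next
  fix z assume "z \<in> fsupp_seqs \<times> fsupp_seqs"
  then obtain s t where z: "z = (s, t)" "s \<in> fsupp_seqs" "t \<in> fsupp_seqs" by auto
  have "(\<lambda>i. s i + t i) - s = t" by (auto simp: fun_eq_iff)
  then show "(\<lambda>(r, s). (s, r - s)) ((\<lambda>(s, t). ((\<lambda>i. s i + t i), s)) z) = z" using z by simp
  have "s \<le> (\<lambda>i. s i + t i)" by (auto simp: le_fun_def)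
  then show "(\<lambda>(s, t). ((\<lambda>i. s i + t i), s)) z \<in> (SIGMA r:fsupp_seqs. {s. s \<le> r})"
    using z fsupp_seqs_add by auto
qed auto

lemma ms_eval_mult:
  assumes bounded: "\<And>i n. norm (b i $ n) \<le> M n" and "f \<in> U_alg" "g \<in> U_alg"
  shows "ms_eval b (ms_mult f g) = ms_eval b f * ms_eval b g"
proof (rule fps_ext)
  fix k
  let ?B = "fps_monomial b"
  define h where "h = (\<lambda>(s, t). f s * g t * ?B (\<lambda>i. s i + t i) $ k)"
  have "((\<lambda>(s, t). (f s * ?B s $ j) * (g t * ?B t $ (k - j)))
          has_sum (ms_eval b f $ j * ms_eval b g $ (k - j))) (fsupp_seqs \<times> fsupp_seqs)" for j
    unfolding ms_eval_nth
    by (rule has_sum_product) (use abs_summable_ms_eval_nth[where b = b, OF bounded] assms in auto)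
  then have "((\<lambda>z. \<Sum>j\<le>k. (\<lambda>(s, t). (f s * ?B s $ j) * (g t * ?B t $ (k - j))) z)
               has_sum (ms_eval b f * ms_eval b g) $ k) (fsupp_seqs \<times> fsupp_seqs)"
    unfolding fps_mult_nth atLeast0AtMost by (intro has_sum_sum) auto
  moreover have "(\<Sum>j\<le>k. (\<lambda>(s, t). (f s * ?B s $ j) * (g t * ?B t $ (k - j))) z) = h z"
    if z: "z \<in> fsupp_seqs \<times> fsupp_seqs" for z
  proof -
    obtain s t where z: "z = (s, t)" "s \<in> fsupp_seqs" "t \<in> fsupp_seqs" using z by auto
    have "(\<Sum>j\<le>k. (f s * ?B s $ j) * (g t * ?B t $ (k - j)))
            = f s * g t * (\<Sum>j\<le>k. ?B s $ j * ?B t $ (k - j))"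
      by (simp add: sum_distrib_left mult_ac)
    also have "\<dots> = h z"
      unfolding h_def z(1) by (simp add: fps_monomial_add[OF z(2,3)] fps_mult_nth atLeast0AtMost)
    finally show ?thesis using z(1) by simp
  qed
  ultimately have "(h has_sum (ms_eval b f * ms_eval b g) $ k) (fsupp_seqs \<times> fsupp_seqs)"
    by (rule has_sum_cong[THEN iffD1, rotated]) simp
  then have "((\<lambda>(r, s). f s * g (r - s) * ?B r $ k) has_sum (ms_eval b f * ms_eval b g) $ k)
               (SIGMA r:fsupp_seqs. {s. s \<le> r})"
    unfolding has_sum_reindex_convolution h_def
    by (rule has_sum_cong[THEN iffD1, rotated]) (auto simp: le_fun_def fun_eq_iff)
  then have "((\<lambda>r. ms_mult f g r * ?B r $ k) has_sum (ms_eval b f * ms_eval b g) $ k) fsupp_seqs"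
  proof (rule has_sum_SigmaD)
    fix r assume "r \<in> fsupp_seqs"
    then show "((\<lambda>s. (\<lambda>(r, s). f s * g (r - s) * ?B r $ k) (r, s))
                 has_sum ms_mult f g r * ?B r $ k) {s. s \<le> r}"
      using finite_lower_indices
      by (auto simp: ms_mult_def sum_distrib_right intro!: has_sum_finiteI)
  qed
  then show "ms_eval b (ms_mult f g) $ k = (ms_eval b f * ms_eval b g) $ k"
    unfolding ms_eval_nth by (rule infsumI)
qed

section \<open>Extending a continuous linear map\<close>

lemma image_ms_restrict_eq_sum:
  fixes \<beta> :: "mseries \<Rightarrow> complex fps"
  assumes lin_add: "\<And>f g. f \<in> U_lin \<Longrightarrow> g \<in> U_lin \<Longrightarrow> \<beta> (ms_add f g) = \<beta> f + \<beta> g"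
    and lin_scale: "\<And>c f. f \<in> U_lin \<Longrightarrow> \<beta> (ms_scale c f) = fps_const c * \<beta> f"
    and f: "f \<in> U_lin" and F: "finite F" "F \<subseteq> fsupp_seqs"
  shows "\<beta> (ms_restrict F f) = (\<Sum>r\<in>F. fps_const (f r) * fps_monomial (\<lambda>i. \<beta> (ms_var i)) r)"
  using F
proof (induction F rule: finite_induct)
  case empty
  have "ms_restrict {} f = ms_scale 0 (\<lambda>_. 0)" by (simp add: ms_restrict_def ms_scale_def)
  then show ?case using lin_scale[OF zero_in_U_lin, of 0] by simp
next
  case (insert r F)
  have IH: "\<beta> (ms_restrict F f) = (\<Sum>r\<in>F. fps_const (f r) * fps_monomial (\<lambda>i. \<beta> (ms_var i)) r)"
    using insert by simp
  show ?case
  proof (cases "msize r = 1")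
    case True
    with insert.prems obtain i where i: "r = unit_index i"
      using msize_eq_1_imp_unit_index by blast
    have "ms_restrict (insert r F) f = ms_add (ms_restrict F f) (ms_scale (f r) (ms_var i))"
      using insert.hyps(2) by (auto simp: ms_restrict_def ms_add_def ms_scale_def ms_var_def i)
    then show ?thesis
      using insert.hyps IH
      by (simp add: lin_add ms_restrict_in_U_lin[OF f] ms_scale_in_U_lin ms_var_in_U_lin
          lin_scale fps_monomial_unit_index i add.commute)
  next
    case False
    then have "f r = 0" using f by (simp add: U_lin_def)
    then have "ms_restrict (insert r F) f = ms_restrict F f" by (auto simp: ms_restrict_def)
    then show ?thesis using IH insert.hyps \<open>f r = 0\<close> by simp
  qed
qed

lemma bounded_images_ms_var:
  fixes \<beta> :: "mseries \<Rightarrow> complex fps"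
  assumes lin_scale: "\<And>c f. f \<in> U_lin \<Longrightarrow> \<beta> (ms_scale c f) = fps_const c * \<beta> f"
    and cont: "continuous_map (subtopology U_top U_lin) fps_top \<beta>"
  obtains M where "\<And>i n. norm (\<beta> (ms_var i) $ n) \<le> M n"
proof -
  have "\<beta> (\<lambda>_. 0) = 0"
    using lin_scale[OF zero_in_U_lin, of 0] by (simp add: ms_scale_def)
  have "\<exists>K. \<forall>i. norm (\<beta> (ms_var i) $ n) \<le> K" for n
  proof -
    have "continuous_map (subtopology U_top U_lin) euclidean (\<lambda>g. \<beta> g $ n)"
      using cont continuous_map_fps_top_iff by blast
    then obtain m e where "e > 0" and close:
      "\<And>g. g \<in> U_lin \<Longrightarrow> qnorm m (\<lambda>r. g r - 0) < e \<Longrightarrow> dist (\<beta> g $ n) (\<beta> (\<lambda>_. 0) $ n) < 1"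
      using continuous_map_U_top_qnormE[OF _ U_lin_subset_U_alg zero_in_U_lin zero_less_one] by blast
    define c where "c = e / (real m + 1)"
    have "c > 0" using \<open>e > 0\<close> by (simp add: c_def)
    have "c * real m < e"
      using \<open>e > 0\<close> by (simp add: c_def field_simps)
    have "norm (\<beta> (ms_var i) $ n) \<le> 1 / c" for i
    proof -
      have "dist (\<beta> (ms_scale c (ms_var i)) $ n) (\<beta> (\<lambda>_. 0) $ n) < 1"
        using close[OF ms_scale_in_U_lin[OF ms_var_in_U_lin]] \<open>c > 0\<close> \<open>c * real m < e\<close>
        by (simp add: qnorm_scale_ms_var)
      then have "c * norm (\<beta> (ms_var i) $ n) < 1"
        using \<open>\<beta> (\<lambda>_. 0) = 0\<close> \<open>c > 0\<close>
        by (simp add: lin_scale[OF ms_var_in_U_lin] dist_norm norm_mult)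
      then show ?thesis using \<open>c > 0\<close> by (simp add: field_simps)
    qed
    then show ?thesis by blast
  qed
  then have "\<exists>M. \<forall>n. \<forall>i. norm (\<beta> (ms_var i) $ n) \<le> M n" by (intro choice allI)
  then show ?thesis using that by blast
qed

lemma ms_eval_eq_on_U_lin:
  fixes \<beta> :: "mseries \<Rightarrow> complex fps"
  assumes lin_add: "\<And>f g. f \<in> U_lin \<Longrightarrow> g \<in> U_lin \<Longrightarrow> \<beta> (ms_add f g) = \<beta> f + \<beta> g"
    and lin_scale: "\<And>c f. f \<in> U_lin \<Longrightarrow> \<beta> (ms_scale c f) = fps_const c * \<beta> f"
    and cont: "continuous_map (subtopology U_top U_lin) fps_top \<beta>"
    and f: "f \<in> U_lin"
  shows "ms_eval (\<lambda>i. \<beta> (ms_var i)) f = \<beta> f"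
proof (rule fps_ext)
  fix k
  let ?B = "fps_monomial (\<lambda>i. \<beta> (ms_var i))"
  have "((\<lambda>r. f r * ?B r $ k) has_sum \<beta> f $ k) fsupp_seqs"
    unfolding has_sum_def
  proof (rule tendstoI)
    fix \<epsilon> :: real assume "\<epsilon> > 0"
    have "continuous_map (subtopology U_top U_lin) euclidean (\<lambda>g. \<beta> g $ k)"
      using cont continuous_map_fps_top_iff by blast
    then obtain m e where "e > 0" and close:
      "\<And>g. g \<in> U_lin \<Longrightarrow> qnorm m (\<lambda>r. g r - f r) < e \<Longrightarrow> dist (\<beta> g $ k) (\<beta> f $ k) < \<epsilon>"
      using continuous_map_U_top_qnormE[OF _ U_lin_subset_U_alg f \<open>\<epsilon> > 0\<close>] by blast
    have "\<forall>\<^sub>F F in finite_subsets_at_top fsupp_seqs. qnorm m (\<lambda>r. ms_restrict F f r - f r) < e"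
      using f U_lin_subset_U_alg \<open>e > 0\<close> by (intro eventually_qnorm_restrict_diff_less) auto
    moreover have "\<forall>\<^sub>F F in finite_subsets_at_top fsupp_seqs. finite F \<and> F \<subseteq> fsupp_seqs"
      by (rule eventually_finite_subsets_at_top_weakI) simp
    ultimately show "\<forall>\<^sub>F F in finite_subsets_at_top fsupp_seqs.
                       dist (\<Sum>r\<in>F. f r * ?B r $ k) (\<beta> f $ k) < \<epsilon>"
    proof eventually_elim
      case (elim F)
      then have "dist (\<beta> (ms_restrict F f) $ k) (\<beta> f $ k) < \<epsilon>"
        using close ms_restrict_in_U_lin[OF f] by blast
      moreover have "\<beta> (ms_restrict F f) $ k = (\<Sum>r\<in>F. f r * ?B r $ k)"
        using image_ms_restrict_eq_sum[OF lin_add lin_scale f] elim by (simp add: fps_sum_nth)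
      ultimately show ?case by simp
    qed
  qed
  then show "ms_eval (\<lambda>i. \<beta> (ms_var i)) f $ k = \<beta> f $ k"
    unfolding ms_eval_nth by (rule infsumI)
qed

theorem theorem5p8:
  fixes \<beta> :: "mseries \<Rightarrow> complex fps"
  assumes lin_add: "\<And>f g. f \<in> U_lin \<Longrightarrow> g \<in> U_lin \<Longrightarrow> \<beta> (ms_add f g) = \<beta> f + \<beta> g"
    and lin_scale: "\<And>c f. f \<in> U_lin \<Longrightarrow> \<beta> (ms_scale c f) = fps_const c * \<beta> f"
    and cont: "continuous_map (subtopology U_top U_lin) fps_top \<beta>"
  shows "\<exists>\<beta>'. continuous_map U_top fps_top \<beta>' \<and>
           (\<forall>f\<in>U_alg. \<forall>g\<in>U_alg. \<beta>' (ms_add f g) = \<beta>' f + \<beta>' g) \<and>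
           (\<forall>c. \<forall>f\<in>U_alg. \<beta>' (ms_scale c f) = fps_const c * \<beta>' f) \<and>
           (\<forall>f\<in>U_alg. \<forall>g\<in>U_alg. \<beta>' (ms_mult f g) = \<beta>' f * \<beta>' g) \<and>
           \<beta>' ms_one = 1 \<and>
           (\<forall>f\<in>U_lin. \<beta>' f = \<beta> f)"
proof -
  let ?b = "\<lambda>i. \<beta> (ms_var i)"
  obtain M where bounded: "\<And>i n. norm (?b i $ n) \<le> M n"
    using bounded_images_ms_var[OF lin_scale cont] by blast
  show ?thesis
  proof (intro exI[of _ "ms_eval ?b"] conjI ballI allI)
    show "continuous_map U_top fps_top (ms_eval ?b)"
      by (rule continuous_map_ms_eval[OF bounded])
    show "ms_eval ?b (ms_add f g) = ms_eval ?b f + ms_eval ?b g" if "f \<in> U_alg" "g \<in> U_alg" for f g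
      by (rule ms_eval_add[OF bounded that])
    show "ms_eval ?b (ms_scale c f) = fps_const c * ms_eval ?b f" for c f
      by (rule ms_eval_scale)
    show "ms_eval ?b (ms_mult f g) = ms_eval ?b f * ms_eval ?b g" if "f \<in> U_alg" "g \<in> U_alg" for f g
      by (rule ms_eval_mult[OF bounded that])
    show "ms_eval ?b ms_one = 1"
      by (rule ms_eval_one)
    show "ms_eval ?b f = \<beta> f" if "f \<in> U_lin" for f
      by (rule ms_eval_eq_on_U_lin[OF lin_add lin_scale cont that])
  qed
qed

end
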